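(* Let $\mathfrak{A}$ be a finite-dimensional $C^*$-algebra with canonical normalized trace $\tau$ and $\|X\|_2=\sqrt{\tau(X^*X)}$. Let $\mathcal{N}$ be a $k$-net of order $d$ over $\mathfrak{A}$ with $2\le k\le\sqrt d$, and let $\mathcal{A}_1,\dots,\mathcal{A}_k$ be the linear spans of its parallel classes. Let $P=P^2=P^*\in\mathrm{Span}(\mathcal{N})$ with $\tau(P)=1/d$, and write $P-\frac1d I=\sum_{j=1}^k A_j$ with $A_j\in\mathcal{A}_j$, $\tau(A_j)=0$ (this decomposition is unique and each $A_j$ is self-adjoint). Put $t_j=\frac{d}{\sqrt{d-1}}\|A_j\|_2$ and let $r$ be an index with $t_r^2\ge 1/k$. Write $A_r=\sum_{s=1}^d\lambda_sQ_s$ where $Q_1,\dots,Q_d$ are the elements of the $r$-th parallel class. Then every $\lambda\in\{\lambda_1,\dots,\lambda_d\}$ (the spectrum of $A_r$) satisfies $$\lambda^2-\frac{d-2}{d}\lambda+\frac{d-1}{d^2}\Big(k-3+\frac1k\Big)\ge 0;$$ in particular $\lambda\le\lambda_-$ or $\lambda\ge\lambda_+$, where $$\lambda_\pm=\frac{1}{2d}\Big(d-2\pm\sqrt{(d-2)^2-4(d-1)\big(k-3+\tfrac1k\big)}\Big)$$ (the discriminant being nonnegative for $k\le\sqrt d$).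
   Context: $\tau=\mathrm{Tr}/\mathrm{Tr}(I)$, where $\mathrm{Tr}$ is the canonical trace of $\mathfrak{A}$ (assigning $1$ to each minimal projection). A $k$-net over $\mathfrak{A}$ is a set $\mathcal{N}$ of orthogonal projections in $\mathfrak{A}$ such that: (i) the relation "$P=Q$ or $PQ=0$" is an equivalence relation on $\mathcal{N}$ with exactly $k$ classes (parallel classes); (ii) if $P,Q\in\mathcal{N}$ lie in different classes then $\tau(PQ)=1/\dim(\mathfrak{A})$; (iii) the elements of each class sum to $I$. Order $d$ means every class has exactly $d$ elements. The spans $\mathcal{A}_j$ are commutative unital $*$-subalgebras that are pairwise quasi-orthogonal: $\tau(AB)=\tau(A)\tau(B)$ for $A\in\mathcal{A}_j,B\in\mathcal{A}_\ell$, $j\ne\ell$. *)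

theory Defs
  imports Complex_Main
begin

text \<open>A finite-dimensional C*-algebra is (up to *-isomorphism) a direct sum
  of full matrix algebras M_{n_1} + ... + M_{n_m}.  We model it concretely by the
  list ns = [n_1,...,n_m] of block sizes (all positive, m >= 1).  An element is a
  function X i a b (block i, row a, column b), vanishing outside the blocks.\<close>

type_synonym cel = "nat \<Rightarrow> nat \<Rightarrow> nat \<Rightarrow> complex"

definition valid_blocks :: "nat list \<Rightarrow> bool" where
  "valid_blocks ns \<longleftrightarrow> ns \<noteq> [] \<and> (\<forall>n\<in>set ns. 0 < n)"

definition inBlk :: "nat list \<Rightarrow> nat \<Rightarrow> nat \<Rightarrow> nat \<Rightarrow> bool" where
  "inBlk ns i a b \<longleftrightarrow> i < length ns \<and> a < ns ! i \<and> b < ns ! i"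

definition inA :: "nat list \<Rightarrow> cel \<Rightarrow> bool" where
  "inA ns X \<longleftrightarrow> (\<forall>i a b. \<not> inBlk ns i a b \<longrightarrow> X i a b = 0)"

definition czero :: cel where
  "czero = (\<lambda>i a b. 0)"

definition cone :: "nat list \<Rightarrow> cel" where
  "cone ns = (\<lambda>i a b. if inBlk ns i a b \<and> a = b then 1 else 0)"

definition cadd :: "cel \<Rightarrow> cel \<Rightarrow> cel" where
  "cadd X Y = (\<lambda>i a b. X i a b + Y i a b)"

definition csub :: "cel \<Rightarrow> cel \<Rightarrow> cel" where
  "csub X Y = (\<lambda>i a b. X i a b - Y i a b)"

definition csc :: "complex \<Rightarrow> cel \<Rightarrow> cel" where
  "csc c X = (\<lambda>i a b. c * X i a b)"

definition csum :: "'x set \<Rightarrow> ('x \<Rightarrow> cel) \<Rightarrow> cel" where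
  "csum F f = (\<lambda>i a b. \<Sum>x\<in>F. f x i a b)"

definition cmul :: "nat list \<Rightarrow> cel \<Rightarrow> cel \<Rightarrow> cel" where
  "cmul ns X Y = (\<lambda>i a b. if inBlk ns i a b then (\<Sum>c<ns ! i. X i a c * Y i c b) else 0)"

definition cadj :: "cel \<Rightarrow> cel" where
  "cadj X = (\<lambda>i a b. cnj (X i b a))"

text \<open>Canonical trace: value 1 on each minimal projection, i.e. sum of the
  ordinary matrix traces of the blocks.\<close>
definition cTr :: "nat list \<Rightarrow> cel \<Rightarrow> complex" where
  "cTr ns X = (\<Sum>i<length ns. \<Sum>a<ns ! i. X i a a)"

definition ctau :: "nat list \<Rightarrow> cel \<Rightarrow> complex" where
  "ctau ns X = cTr ns X / cTr ns (cone ns)"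

definition cdim :: "nat list \<Rightarrow> nat" where
  "cdim ns = (\<Sum>i<length ns. (ns ! i)^2)"

definition cnorm2 :: "nat list \<Rightarrow> cel \<Rightarrow> real" where
  "cnorm2 ns X = sqrt (Re (ctau ns (cmul ns (cadj X) X)))"

definition is_proj :: "nat list \<Rightarrow> cel \<Rightarrow> bool" where
  "is_proj ns X \<longleftrightarrow> inA ns X \<and> cmul ns X X = X \<and> cadj X = X"

definition cspan :: "cel set \<Rightarrow> cel set" where
  "cspan S = {X. \<exists>F c. finite F \<and> F \<subseteq> S \<and> X = csum F (\<lambda>Q. csc (c Q) Q)}"

definition par_rel :: "nat list \<Rightarrow> cel set \<Rightarrow> (cel \<times> cel) set" where
  "par_rel ns N = {(P, Q). P \<in> N \<and> Q \<in> N \<and> (P = Q \<or> cmul ns P Q = czero)}"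

definition is_net :: "nat list \<Rightarrow> nat \<Rightarrow> cel set \<Rightarrow> bool" where
  "is_net ns k N \<longleftrightarrow>
     (\<forall>P\<in>N. is_proj ns P) \<and>
     equiv N (par_rel ns N) \<and>
     finite (N // par_rel ns N) \<and> card (N // par_rel ns N) = k \<and>
     (\<forall>P\<in>N. \<forall>Q\<in>N. (P, Q) \<notin> par_rel ns N \<longrightarrow>
        ctau ns (cmul ns P Q) = 1 / of_nat (cdim ns)) \<and>
     (\<forall>C\<in>N // par_rel ns N. finite C \<and> csum C (\<lambda>Q. Q) = cone ns)"

definition net_order :: "nat list \<Rightarrow> cel set \<Rightarrow> nat \<Rightarrow> bool" where
  "net_order ns N d \<longleftrightarrow> (\<forall>C\<in>N // par_rel ns N. card C = d)"

end

theory Submission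
  imports Defs
begin

text \<open>
Fix Q in the r-th parallel class, so that A_r Q = \<lambda> Q, and put \<mu> = 1/d + \<lambda>. Since Q annihilates
the other members of its class, the decomposition of P - I/d gives
P Q - \<mu> Q = \<Sum>_{j \<noteq> r} A_j Q. By quasi-orthogonality \<tau>(P Q) = \<mu>/d, so the left side has
squared 2-norm \<mu>(1 - \<mu>)/d. On the right, Cauchy-Schwarz together with
\<parallel>A_j Q\<parallel>_2^2 = \<parallel>A_j\<parallel>_2^2/d (quasi-orthogonality again) bounds the squared norm by
(k - 1)/d \<cdot> \<Sum>_{j \<noteq> r} \<parallel>A_j\<parallel>_2^2, and by Pythagoras
\<Sum>_j \<parallel>A_j\<parallel>_2^2 = \<parallel>P - I/d\<parallel>_2^2 = (d - 1)/d^2. The hypothesis t_r^2 \<ge> 1/k therefore gives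
\<mu>(1 - \<mu>) \<le> (d - 1)(k - 1)^2/(d^2 k), which is the stated quadratic inequality for \<lambda>.
\<close>

lemma sum_squared_le_card_sum_squares:
  fixes x :: "'a \<Rightarrow> real"
  shows "(\<Sum>j\<in>J. x j)\<^sup>2 \<le> real (card J) * (\<Sum>j\<in>J. (x j)\<^sup>2)"
proof -
  have "0 \<le> (\<Sum>i\<in>J. \<Sum>j\<in>J. (x i - x j)\<^sup>2)"
    by (intro sum_nonneg) simp
  also have "\<dots> = 2 * real (card J) * (\<Sum>j\<in>J. (x j)\<^sup>2) - 2 * (\<Sum>j\<in>J. x j)\<^sup>2"
    by (simp add: power2_diff sum.distrib sum_subtractf sum_distrib_left sum_distrib_right
        power2_eq_square algebra_simps)
  finally show ?thesis by simp
qed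

lemma quadratic_nonneg_outside_roots:
  fixes b c d x :: real
  assumes d: "0 < d" and nonneg: "0 \<le> x\<^sup>2 - b / d * x + c / d\<^sup>2"
  shows "x \<le> 1 / (2 * d) * (b - sqrt (b\<^sup>2 - 4 * c)) \<or> 1 / (2 * d) * (b + sqrt (b\<^sup>2 - 4 * c)) \<le> x"
proof -
  have "d\<^sup>2 * (x\<^sup>2 - b / d * x + c / d\<^sup>2) = (d * x)\<^sup>2 - b * (d * x) + c"
    using d by (simp add: field_simps power2_eq_square)
  then have "0 \<le> (d * x)\<^sup>2 - b * (d * x) + c"
    using nonneg by (metis zero_le_mult_iff zero_le_power2)
  then have "b\<^sup>2 - 4 * c \<le> (2 * (d * x) - b)\<^sup>2"
    by (simp add: algebra_simps power2_eq_square)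
  then have "sqrt (b\<^sup>2 - 4 * c) \<le> \<bar>2 * (d * x) - b\<bar>"
    using real_sqrt_le_mono real_sqrt_abs by metis
  then have "2 * d * x \<le> b - sqrt (b\<^sup>2 - 4 * c) \<or> b + sqrt (b\<^sup>2 - 4 * c) \<le> 2 * d * x"
    by linarith
  then show ?thesis
    using d by (auto simp: pos_le_divide_eq pos_divide_le_eq mult.commute)
qed

lemma cmul_assoc: "cmul ns (cmul ns X Y) Z = cmul ns X (cmul ns Y Z)"
  unfolding cmul_def
  by (intro ext) (auto simp: inBlk_def sum_distrib_left sum_distrib_right mult.assoc intro: sum.swap)

lemma cadj_cmul: "cadj (cmul ns X Y) = cmul ns (cadj Y) (cadj X)"
  unfolding cmul_def cadj_def by (intro ext) (auto simp: inBlk_def mult.commute)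

lemma cmul_csum_left: "cmul ns (csum F f) Y = csum F (\<lambda>x. cmul ns (f x) Y)"
  unfolding cmul_def csum_def by (intro ext) (auto simp: sum_distrib_right intro: sum.swap)

lemma cmul_csum_right: "cmul ns Y (csum F f) = csum F (\<lambda>x. cmul ns Y (f x))"
  unfolding cmul_def csum_def by (intro ext) (auto simp: sum_distrib_left intro: sum.swap)

lemma cmul_csc_left: "cmul ns (csc c X) Y = csc c (cmul ns X Y)"
  unfolding cmul_def csc_def by (intro ext) (auto simp: sum_distrib_left mult.assoc)

lemma cmul_csc_right: "cmul ns Y (csc c X) = csc c (cmul ns Y X)"
  unfolding cmul_def csc_def by (intro ext) (auto simp: sum_distrib_left mult.left_commute)

lemma cmul_csub_left: "cmul ns (csub X Z) Y = csub (cmul ns X Y) (cmul ns Z Y)"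
  unfolding cmul_def csub_def by (intro ext) (auto simp: algebra_simps sum_subtractf)

lemma cmul_csub_right: "cmul ns Y (csub X Z) = csub (cmul ns Y X) (cmul ns Y Z)"
  unfolding cmul_def csub_def by (intro ext) (auto simp: algebra_simps sum_subtractf)

lemma cmul_cadd_left: "cmul ns (cadd X Z) Y = cadd (cmul ns X Y) (cmul ns Z Y)"
  unfolding cmul_def cadd_def by (intro ext) (auto simp: algebra_simps sum.distrib)

lemma cmul_cone_left: "inA ns X \<Longrightarrow> cmul ns (cone ns) X = X"
  unfolding cmul_def cone_def inA_def
  by (intro ext) (auto simp: inBlk_def if_distrib[of "\<lambda>u. u * _"] cong: if_cong)

lemma cmul_cone_right: "inA ns X \<Longrightarrow> cmul ns X (cone ns) = X"
  unfolding cmul_def cone_def inA_def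
  by (intro ext) (auto simp: inBlk_def if_distrib[of "\<lambda>u. _ * u"] cong: if_cong)

lemma inA_cone: "inA ns (cone ns)"
  unfolding inA_def cone_def by auto

lemma csc_csc: "csc a (csc b X) = csc (a * b) X"
  unfolding csc_def by (intro ext) (simp add: mult.assoc)

lemma csum_cong: "(\<And>x. x \<in> F \<Longrightarrow> f x = g x) \<Longrightarrow> csum F f = csum F g"
  unfolding csum_def by (intro ext sum.cong) auto

lemma csum_csc_delta:
  assumes "finite C" "Q \<in> C"
  shows "csum C (\<lambda>R. csc (a R) (if R = Q then Q else czero)) = csc (a Q) Q"
  using assms unfolding csum_def csc_def czero_def
  by (intro ext) (simp add: if_distrib[of "\<lambda>X. X _ _ _"] if_distrib[of "\<lambda>u. _ * u"] cong: if_cong)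

lemma cadj_csum: "cadj (csum F f) = csum F (\<lambda>x. cadj (f x))"
  unfolding cadj_def csum_def by auto

lemma cadj_csc: "cadj (csc c X) = csc (cnj c) (cadj X)"
  unfolding cadj_def csc_def by auto

lemma cadj_csub: "cadj (csub X Y) = csub (cadj X) (cadj Y)"
  unfolding cadj_def csub_def by auto

lemma cadj_cone: "cadj (cone ns) = cone ns"
  unfolding cadj_def cone_def by (intro ext) (auto simp: inBlk_def)

lemma cTr_cmul_commute: "cTr ns (cmul ns X Y) = cTr ns (cmul ns Y X)"
  unfolding cTr_def cmul_def
  by (rule sum.cong[OF refl]) (simp add: inBlk_def, subst sum.swap, simp add: mult.commute)

lemma ctau_cmul_commute: "ctau ns (cmul ns X Y) = ctau ns (cmul ns Y X)"
  unfolding ctau_def by (simp add: cTr_cmul_commute)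

lemma ctau_csum: "ctau ns (csum F f) = (\<Sum>x\<in>F. ctau ns (f x))"
  unfolding ctau_def cTr_def csum_def by (simp add: sum.swap[of _ F] sum_divide_distrib)

lemma ctau_csc: "ctau ns (csc c X) = c * ctau ns X"
  unfolding ctau_def cTr_def csc_def by (simp add: sum_distrib_left)

lemma ctau_csub: "ctau ns (csub X Y) = ctau ns X - ctau ns Y"
  unfolding ctau_def cTr_def csub_def by (simp add: sum_subtractf diff_divide_distrib)

lemma cTr_cone: "cTr ns (cone ns) = of_nat (\<Sum>i<length ns. ns ! i)"
  unfolding cTr_def cone_def by (simp add: inBlk_def)

lemma valid_blocks_sum_pos: "valid_blocks ns \<Longrightarrow> 0 < (\<Sum>i<length ns. ns ! i)"
  unfolding valid_blocks_def
  by (metis gr0I length_greater_0_conv lessThan_iff nth_mem sum_eq_0_iff finite_lessThan)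

lemma ctau_cone:
  assumes "valid_blocks ns"
  shows "ctau ns (cone ns) = 1"
proof -
  have "cTr ns (cone ns) \<noteq> 0"
    unfolding cTr_cone of_nat_eq_0_iff using valid_blocks_sum_pos[OF assms] by linarith
  then show ?thesis
    unfolding ctau_def by simp
qed

definition hs_norm_sq :: "nat list \<Rightarrow> cel \<Rightarrow> real" where
  "hs_norm_sq ns X = (\<Sum>i<length ns. \<Sum>a<ns ! i. \<Sum>b<ns ! i. (cmod (X i b a))\<^sup>2)"

lemma cTr_cadj_mul_self: "cTr ns (cmul ns (cadj X) X) = of_real (hs_norm_sq ns X)"
  unfolding cTr_def cmul_def cadj_def hs_norm_sq_def
  by (simp add: inBlk_def mult.commute flip: complex_norm_square of_real_power)

lemma hs_norm_sq_csum_le: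
  assumes "finite J"
  shows "hs_norm_sq ns (csum J f) \<le> real (card J) * (\<Sum>j\<in>J. hs_norm_sq ns (f j))"
proof -
  have "(cmod (\<Sum>j\<in>J. z j))\<^sup>2 \<le> real (card J) * (\<Sum>j\<in>J. (cmod (z j))\<^sup>2)" for z
  proof -
    have "(cmod (\<Sum>j\<in>J. z j))\<^sup>2 \<le> (\<Sum>j\<in>J. cmod (z j))\<^sup>2"
      by (intro power_mono norm_sum) simp
    also have "\<dots> \<le> real (card J) * (\<Sum>j\<in>J. (cmod (z j))\<^sup>2)"
      by (rule sum_squared_le_card_sum_squares)
    finally show ?thesis .
  qed
  hence "hs_norm_sq ns (csum J f) \<le>
      (\<Sum>i<length ns. \<Sum>a<ns ! i. \<Sum>b<ns ! i. real (card J) * (\<Sum>j\<in>J. (cmod (f j i b a))\<^sup>2))"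
    unfolding hs_norm_sq_def csum_def by (intro sum_mono)
  also have "\<dots> = real (card J) * (\<Sum>j\<in>J. hs_norm_sq ns (f j))"
    unfolding hs_norm_sq_def by (simp add: sum_distrib_left sum.swap[of _ J])
  finally show ?thesis .
qed

lemma cnorm2_sq:
  assumes "valid_blocks ns"
  shows "(cnorm2 ns X)\<^sup>2 = hs_norm_sq ns X / real (\<Sum>i<length ns. ns ! i)"
proof -
  have "0 \<le> hs_norm_sq ns X"
    unfolding hs_norm_sq_def by (intro sum_nonneg) simp
  then show ?thesis
    unfolding cnorm2_def ctau_def cTr_cadj_mul_self cTr_cone by (simp del: of_nat_sum)
qed

lemma cnorm2_csum_sq_le:
  assumes "valid_blocks ns" "finite J"
  shows "(cnorm2 ns (csum J f))\<^sup>2 \<le> real (card J) * (\<Sum>j\<in>J. (cnorm2 ns (f j))\<^sup>2)"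
  using hs_norm_sq_csum_le[OF assms(2), of ns f] valid_blocks_sum_pos[OF assms(1)]
  unfolding cnorm2_sq[OF assms(1)]
  by (simp add: sum_divide_distrib[symmetric] divide_right_mono del: of_nat_sum)

definition tau_inner :: "nat list \<Rightarrow> cel \<Rightarrow> cel \<Rightarrow> complex" where
  "tau_inner ns X Y = ctau ns (cmul ns (cadj X) Y)"

lemma tau_inner_self:
  assumes "valid_blocks ns"
  shows "tau_inner ns X X = of_real ((cnorm2 ns X)\<^sup>2)"
  unfolding tau_inner_def cnorm2_sq[OF assms] ctau_def cTr_cadj_mul_self cTr_cone
  by (simp del: of_nat_sum)

lemma is_proj_cone: "is_proj ns (cone ns)"
  unfolding is_proj_def using inA_cone cmul_cone_left cadj_cone by blast

lemma tau_inner_csum_orthogonal: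
  assumes "finite F" and orth: "\<And>x y. x \<in> F \<Longrightarrow> y \<in> F \<Longrightarrow> x \<noteq> y \<Longrightarrow> tau_inner ns (f x) (f y) = 0"
  shows "tau_inner ns (csum F f) (csum F f) = (\<Sum>x\<in>F. tau_inner ns (f x) (f x))"
proof -
  have "tau_inner ns (csum F f) (csum F f) = (\<Sum>x\<in>F. \<Sum>y\<in>F. tau_inner ns (f x) (f y))"
    unfolding tau_inner_def cadj_csum cmul_csum_left cmul_csum_right ctau_csum by (rule sum.swap)
  also have "\<dots> = (\<Sum>x\<in>F. tau_inner ns (f x) (f x))"
  proof (rule sum.cong[OF refl])
    fix x assume "x \<in> F"
    then show "(\<Sum>y\<in>F. tau_inner ns (f x) (f y)) = tau_inner ns (f x) (f x)"
      using assms by (simp add: sum.remove) (intro sum.neutral, auto)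
  qed
  finally show ?thesis .
qed

lemma tau_inner_proj_mul_proj_sub:
  fixes \<mu> :: real
  assumes P: "is_proj ns P" and Q: "is_proj ns Q"
  defines "Y \<equiv> csub (cmul ns P Q) (csc (of_real \<mu>) Q)"
  shows "tau_inner ns Y Y = (1 - 2 * of_real \<mu>) * ctau ns (cmul ns P Q) + (of_real \<mu>)\<^sup>2 * ctau ns Q"
proof -
  have PP: "cmul ns P P = P" and PA: "cadj P = P" and QQ: "cmul ns Q Q = Q" and QA: "cadj Q = Q"
    using P Q unfolding is_proj_def by auto
  have QPQ: "ctau ns (cmul ns Q (cmul ns P Q)) = ctau ns (cmul ns P Q)"
    by (metis ctau_cmul_commute cmul_assoc QQ)
  have "cmul ns (cmul ns Q P) (cmul ns P Q) = cmul ns Q (cmul ns P Q)"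
    by (metis cmul_assoc PP)
  then show ?thesis
    unfolding Y_def tau_inner_def cadj_csub cadj_cmul cadj_csc PA QA cmul_csub_left cmul_csub_right
      cmul_csc_left cmul_csc_right ctau_csub ctau_csc cmul_assoc QQ
    by (simp add: QPQ algebra_simps power2_eq_square)
qed

lemma tau_inner_mul_proj:
  assumes "is_proj ns Q"
  shows "tau_inner ns (cmul ns M Q) (cmul ns M Q) = ctau ns (cmul ns (cmul ns (cadj M) M) Q)"
proof -
  have "cmul ns Q Q = Q" "cadj Q = Q"
    using assms unfolding is_proj_def by auto
  then show ?thesis
    unfolding tau_inner_def cadj_cmul
    by (metis cmul_assoc ctau_cmul_commute)
qed

definition class_comb :: "cel set \<Rightarrow> (cel \<Rightarrow> complex) \<Rightarrow> cel" where
  "class_comb C a = csum C (\<lambda>R. csc (a R) R)"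

locale finite_net =
  fixes ns :: "nat list" and k d :: nat and N :: "cel set"
  assumes blocks: "valid_blocks ns"
    and net: "is_net ns k N" and order: "net_order ns N d"
    and two_le_k: "2 \<le> k"
begin

abbreviation classes :: "cel set set" where
  "classes \<equiv> N // par_rel ns N"

lemma equiv_par_rel: "equiv N (par_rel ns N)"
  using net unfolding is_net_def by blast

lemma finite_classes: "finite classes"
  using net unfolding is_net_def by blast

lemma card_classes: "card classes = k"
  using net unfolding is_net_def by blast

lemma finite_class: "C \<in> classes \<Longrightarrow> finite C"
  using net unfolding is_net_def by blast

lemma card_class: "C \<in> classes \<Longrightarrow> card C = d"
  using order unfolding net_order_def by blast

lemma csum_class_eq_cone: "C \<in> classes \<Longrightarrow> csum C (\<lambda>Q. Q) = cone ns"
  using net unfolding is_net_def by blast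

lemma class_subset: "C \<in> classes \<Longrightarrow> C \<subseteq> N"
  using equiv_par_rel by (meson in_quotient_imp_subset equiv_type)

lemma is_proj_class_elem: "C \<in> classes \<Longrightarrow> R \<in> C \<Longrightarrow> is_proj ns R"
  using net class_subset unfolding is_net_def by blast

lemma cmul_class_elems:
  assumes C: "C \<in> classes" and R: "R \<in> C" and Q: "Q \<in> C"
  shows "cmul ns R Q = (if R = Q then Q else czero)"
proof (cases "R = Q")
  case True
  then show ?thesis
    using is_proj_class_elem[OF C Q] unfolding is_proj_def by simp
next
  case False
  have "(R, Q) \<in> par_rel ns N"
    using quotient_eq_iff[OF equiv_par_rel C C R Q] by simp
  with False show ?thesis
    unfolding par_rel_def by simp
qed

lemma ctau_cmul_other_class_cdim:
  assumes "C \<in> classes" "C' \<in> classes" "C \<noteq> C'" "R \<in> C" "R' \<in> C'"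
  shows "ctau ns (cmul ns R R') = 1 / of_nat (cdim ns)"
proof -
  have "(R, R') \<notin> par_rel ns N"
    using quotient_eq_iff[OF equiv_par_rel assms(1,2,4,5)] assms(3) by simp
  moreover have "R \<in> N" "R' \<in> N"
    using assms class_subset by auto
  ultimately show ?thesis
    using net unfolding is_net_def by blast
qed

lemma ex_class_elem: "\<exists>C R. C \<in> classes \<and> R \<in> C"
proof -
  have "classes \<noteq> {}"
    using card_classes two_le_k by auto
  then show ?thesis
    using equiv_par_rel in_quotient_imp_non_empty by (metis all_not_in_conv)
qed

lemma ex_other_class: "\<exists>C'\<in>classes. C' \<noteq> C"
proof (rule ccontr)
  assume "\<not> (\<exists>C'\<in>classes. C' \<noteq> C)"
  then have "card classes \<le> card {C}"
    by (intro card_mono) auto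
  then show False
    using card_classes two_le_k by simp
qed

lemma d_pos: "0 < d"
  using ex_class_elem card_class finite_class card_gt_0_iff by blast

lemma ctau_class_elem_cdim:
  assumes C: "C \<in> classes" and R: "R \<in> C"
  shows "ctau ns R = of_nat d / of_nat (cdim ns)"
proof -
  obtain C' where C': "C' \<in> classes" "C' \<noteq> C"
    using ex_other_class by blast
  have "ctau ns R = ctau ns (cmul ns R (csum C' (\<lambda>Q. Q)))"
    using is_proj_class_elem[OF C R] cmul_cone_right csum_class_eq_cone[OF C'(1)]
    unfolding is_proj_def by simp
  also have "\<dots> = (\<Sum>Q\<in>C'. 1 / of_nat (cdim ns))"
    unfolding cmul_csum_right ctau_csum
    using ctau_cmul_other_class_cdim[OF C C'(1) C'(2)[symmetric] R] by simp
  also have "\<dots> = of_nat d / of_nat (cdim ns)"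
    using card_class[OF C'(1)] by simp
  finally show ?thesis .
qed

lemma cdim_eq_square: "cdim ns = d\<^sup>2"
proof -
  obtain C R where C: "C \<in> classes" "R \<in> C"
    using ex_class_elem by blast
  have "1 = ctau ns (csum C (\<lambda>Q. Q))"
    using ctau_cone[OF blocks] csum_class_eq_cone[OF C(1)] by simp
  also have "\<dots> = of_nat d * of_nat d / of_nat (cdim ns)"
    unfolding ctau_csum using ctau_class_elem_cdim[OF C(1)] card_class[OF C(1)] by simp
  finally have "(of_nat (cdim ns) :: complex) = of_nat (d * d)"
    by (simp add: eq_divide_eq split: if_splits)
  then show ?thesis
    unfolding of_nat_eq_iff by (simp add: power2_eq_square)
qed

lemma ctau_class_elem: "C \<in> classes \<Longrightarrow> R \<in> C \<Longrightarrow> ctau ns R = 1 / of_nat d"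
  using ctau_class_elem_cdim cdim_eq_square d_pos by (simp add: power2_eq_square)

lemma ctau_cmul_other_class:
  "C \<in> classes \<Longrightarrow> C' \<in> classes \<Longrightarrow> C \<noteq> C' \<Longrightarrow> R \<in> C \<Longrightarrow> R' \<in> C' \<Longrightarrow>
    ctau ns (cmul ns R R') = 1 / (of_nat d)\<^sup>2"
  using ctau_cmul_other_class_cdim cdim_eq_square by simp

lemma cmul_class_comb_elem:
  assumes "C \<in> classes" "Q \<in> C"
  shows "cmul ns (class_comb C a) Q = csc (a Q) Q"
proof -
  have "cmul ns (class_comb C a) Q = csum C (\<lambda>R. csc (a R) (cmul ns R Q))"
    unfolding class_comb_def cmul_csum_left cmul_csc_left ..
  also have "\<dots> = csum C (\<lambda>R. csc (a R) (if R = Q then Q else czero))"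
    by (intro csum_cong) (simp add: cmul_class_elems[OF assms(1) _ assms(2)])
  finally show ?thesis
    unfolding csum_csc_delta[OF finite_class[OF assms(1)] assms(2)] .
qed

lemma cmul_elem_class_comb:
  assumes "C \<in> classes" "Q \<in> C"
  shows "cmul ns Q (class_comb C a) = csc (a Q) Q"
proof -
  have "cmul ns Q (class_comb C a) = csum C (\<lambda>R. csc (a R) (cmul ns Q R))"
    unfolding class_comb_def cmul_csum_right cmul_csc_right ..
  also have "\<dots> = csum C (\<lambda>R. csc (a R) (if R = Q then Q else czero))"
    by (intro csum_cong) (auto simp: cmul_class_elems[OF assms(1) assms(2)])
  finally show ?thesis
    unfolding csum_csc_delta[OF finite_class[OF assms(1)] assms(2)] .
qed

lemma cmul_class_comb:
  "C \<in> classes \<Longrightarrow> cmul ns (class_comb C a) (class_comb C b) = class_comb C (\<lambda>R. a R * b R)"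
  unfolding class_comb_def[of C a] cmul_csum_left cmul_csc_left class_comb_def[of C "\<lambda>R. a R * b R"]
  by (intro csum_cong) (simp add: cmul_elem_class_comb csc_csc)

lemma cadj_class_comb:
  "C \<in> classes \<Longrightarrow> cadj (class_comb C a) = class_comb C (\<lambda>R. cnj (a R))"
  unfolding class_comb_def cadj_csum cadj_csc
  by (intro csum_cong) (use is_proj_class_elem in \<open>auto simp: is_proj_def\<close>)

lemma ctau_class_comb:
  "C \<in> classes \<Longrightarrow> ctau ns (class_comb C a) = (\<Sum>R\<in>C. a R) / of_nat d"
  unfolding class_comb_def ctau_csum ctau_csc
  by (simp add: ctau_class_elem sum_divide_distrib)

lemma ctau_class_comb_mul_other:
  assumes "C \<in> classes" "C' \<in> classes" "C \<noteq> C'" "Q \<in> C'"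
  shows "ctau ns (cmul ns (class_comb C a) Q) = (\<Sum>R\<in>C. a R) / (of_nat d)\<^sup>2"
  unfolding class_comb_def cmul_csum_left ctau_csum cmul_csc_left ctau_csc
  using ctau_cmul_other_class[OF assms(1-3) _ assms(4)] by (simp add: sum_divide_distrib)

lemma ctau_class_comb_mul_class_comb_other:
  assumes "C \<in> classes" "C' \<in> classes" "C \<noteq> C'"
  shows "ctau ns (cmul ns (class_comb C a) (class_comb C' b)) =
    (\<Sum>R\<in>C. a R) * (\<Sum>R\<in>C'. b R) / (of_nat d)\<^sup>2"
  unfolding class_comb_def[of C' b] cmul_csum_right ctau_csum cmul_csc_right ctau_csc
  using ctau_class_comb_mul_other[OF assms]
  by (simp add: sum_divide_distrib sum_distrib_left sum_distrib_right mult.commute)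

lemma cspan_class_comb:
  assumes C: "C \<in> classes" and X: "X \<in> cspan C"
  obtains a where "X = class_comb C a"
proof -
  obtain F c where F: "finite F" "F \<subseteq> C" "X = csum F (\<lambda>Q. csc (c Q) Q)"
    using X unfolding cspan_def by blast
  have "X = class_comb C (\<lambda>R. if R \<in> F then c R else 0)"
    unfolding F(3) class_comb_def csum_def csc_def
    using finite_class[OF C] F(2)
    by (intro ext) (simp add: if_distrib[of "\<lambda>u. u * _"] sum.inter_restrict[symmetric]
        Int_absorb1 cong: if_cong)
  then show thesis
    by (rule that)
qed

end

locale net_decomposition = finite_net +
  fixes P :: cel and A :: "cel set \<Rightarrow> cel"
  assumes P_proj: "is_proj ns P"
    and ctau_P: "ctau ns P = 1 / of_nat d"
    and components: "\<forall>C\<in>classes. A C \<in> cspan C \<and> ctau ns (A C) = 0"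
    and decomposition: "csub P (csc (1 / of_nat d) (cone ns)) = csum classes A"
begin

lemma component_class_comb:
  assumes "C \<in> classes"
  obtains a where "A C = class_comb C a" and "(\<Sum>R\<in>C. a R) = 0"
proof -
  obtain a where a: "A C = class_comb C a"
    using cspan_class_comb[OF assms] components assms by blast
  moreover have "(\<Sum>R\<in>C. a R) = 0"
    using components assms ctau_class_comb[OF assms, of a] d_pos unfolding a[symmetric] by simp
  ultimately show thesis
    by (rule that)
qed

lemma tau_inner_components:
  assumes "C \<in> classes" "C' \<in> classes" "C \<noteq> C'"
  shows "tau_inner ns (A C) (A C') = 0"
proof -
  obtain a where a: "A C = class_comb C a"
    using component_class_comb[OF assms(1)] by blast
  obtain b where b: "A C' = class_comb C' b" "(\<Sum>R\<in>C'. b R) = 0"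
    using component_class_comb[OF assms(2)] by blast
  show ?thesis
    unfolding tau_inner_def a b cadj_class_comb[OF assms(1)]
      ctau_class_comb_mul_class_comb_other[OF assms] by simp
qed

lemma sum_cnorm2_components:
  "(\<Sum>C\<in>classes. (cnorm2 ns (A C))\<^sup>2) = (real d - 1) / (real d)\<^sup>2"
proof -
  have "of_real (\<Sum>C\<in>classes. (cnorm2 ns (A C))\<^sup>2) = tau_inner ns (csum classes A) (csum classes A)"
    using tau_inner_csum_orthogonal[OF finite_classes tau_inner_components]
    by (simp add: tau_inner_self[OF blocks])
  also have "\<dots> = (1 - 2 / of_nat d) * ctau ns P + (1 / of_nat d)\<^sup>2 * ctau ns (cone ns)"
    using tau_inner_proj_mul_proj_sub[OF P_proj is_proj_cone, of "1 / real d"]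
      cmul_cone_right[of ns P] P_proj
    unfolding decomposition[symmetric] is_proj_def by simp
  also have "\<dots> = of_real ((real d - 1) / (real d)\<^sup>2)"
    unfolding ctau_P ctau_cone[OF blocks] using d_pos by (simp add: field_simps power2_eq_square)
  finally show ?thesis
    by (simp only: of_real_eq_iff)
qed

lemma cnorm2_component_mul_other:
  assumes C: "C \<in> classes" and C0: "C0 \<in> classes" "C \<noteq> C0" and Q: "Q \<in> C0"
  shows "(cnorm2 ns (cmul ns (A C) Q))\<^sup>2 = (cnorm2 ns (A C))\<^sup>2 / real d"
proof -
  obtain a where a: "A C = class_comb C a"
    using component_class_comb[OF C] by blast
  have "tau_inner ns (cmul ns (A C) Q) (cmul ns (A C) Q) = (\<Sum>R\<in>C. cnj (a R) * a R) / (of_nat d)\<^sup>2"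
    unfolding tau_inner_mul_proj[OF is_proj_class_elem[OF C0(1) Q]] a
      cadj_class_comb[OF C] cmul_class_comb[OF C]
    by (rule ctau_class_comb_mul_other[OF C C0 Q])
  also have "\<dots> = tau_inner ns (A C) (A C) / of_nat d"
    unfolding tau_inner_def a cadj_class_comb[OF C] cmul_class_comb[OF C] ctau_class_comb[OF C]
    by (simp add: power2_eq_square)
  finally show ?thesis
    unfolding tau_inner_self[OF blocks] by (metis of_real_divide of_real_eq_iff of_real_of_nat_eq)
qed

lemma ctau_component_mul_other:
  assumes C: "C \<in> classes" and C0: "C0 \<in> classes" "C \<noteq> C0" and Q: "Q \<in> C0"
  shows "ctau ns (cmul ns (A C) Q) = 0"
proof -
  obtain a where "A C = class_comb C a" "(\<Sum>R\<in>C. a R) = 0"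
    using component_class_comb[OF C] by blast
  then show ?thesis
    using ctau_class_comb_mul_other[OF C C0 Q] by simp
qed

lemma csum_off_class_components_mul:
  fixes lam :: real
  assumes C0: "C0 \<in> classes" and Q: "Q \<in> C0"
    and eigen: "cmul ns (A C0) Q = csc (of_real lam) Q"
  shows "csum (classes - {C0}) (\<lambda>C. cmul ns (A C) Q) =
    csub (cmul ns P Q) (csc (of_real (1 / real d + lam)) Q)"
proof -
  have "P = cadd (csc (1 / of_nat d) (cone ns)) (cadd (A C0) (csum (classes - {C0}) A))"
  proof (intro ext)
    fix i a b
    have "P i a b - 1 / of_nat d * cone ns i a b = (\<Sum>C\<in>classes. A C i a b)"
      using fun_cong[OF fun_cong[OF fun_cong[OF decomposition]], of i a b]
      unfolding csub_def csc_def csum_def by simp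
    then show "P i a b = cadd (csc (1 / of_nat d) (cone ns)) (cadd (A C0) (csum (classes - {C0}) A)) i a b"
      unfolding cadd_def csc_def csum_def using finite_classes C0
      by (simp add: sum.remove algebra_simps)
  qed
  then have "cmul ns P Q =
      cadd (csc (1 / of_nat d) Q) (cadd (csc (of_real lam) Q) (csum (classes - {C0}) (\<lambda>C. cmul ns (A C) Q)))"
    using is_proj_class_elem[OF C0 Q]
    unfolding is_proj_def by (simp add: cmul_cadd_left cmul_csc_left cmul_cone_left eigen cmul_csum_left)
  then show ?thesis
    unfolding csub_def cadd_def csc_def by (intro ext) (simp add: algebra_simps)
qed

lemma eigenvalue_product_bound:
  fixes lam :: real
  assumes C0: "C0 \<in> classes" and Q: "Q \<in> C0"
    and eigen: "cmul ns (A C0) Q = csc (of_real lam) Q"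
  defines "\<mu> \<equiv> 1 / real d + lam"
  shows "\<mu> * (1 - \<mu>) \<le> (real k - 1) * (\<Sum>C\<in>classes - {C0}. (cnorm2 ns (A C))\<^sup>2)"
proof -
  define Y where "Y = csum (classes - {C0}) (\<lambda>C. cmul ns (A C) Q)"
  have Y: "Y = csub (cmul ns P Q) (csc (of_real \<mu>) Q)"
    unfolding Y_def \<mu>_def by (rule csum_off_class_components_mul[OF C0 Q eigen])
  have "ctau ns Y = 0"
    unfolding Y_def ctau_csum using ctau_component_mul_other[OF _ C0 _ Q] by simp
  then have ctau_PQ: "ctau ns (cmul ns P Q) = of_real \<mu> / of_nat d"
    unfolding Y ctau_csub ctau_csc ctau_class_elem[OF C0 Q] by simp
  have "of_real ((cnorm2 ns Y)\<^sup>2) = (of_real (\<mu> * (1 - \<mu>) / real d) :: complex)"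
    unfolding tau_inner_self[OF blocks, symmetric] Y
      tau_inner_proj_mul_proj_sub[OF P_proj is_proj_class_elem[OF C0 Q]]
      ctau_PQ ctau_class_elem[OF C0 Q]
    by (simp add: power2_eq_square diff_divide_distrib add_divide_distrib algebra_simps)
  then have "\<mu> * (1 - \<mu>) / real d = (cnorm2 ns Y)\<^sup>2"
    by (simp only: of_real_eq_iff)
  also have "\<dots> \<le> real (card (classes - {C0})) * (\<Sum>C\<in>classes - {C0}. (cnorm2 ns (cmul ns (A C) Q))\<^sup>2)"
    unfolding Y_def using finite_classes by (intro cnorm2_csum_sq_le[OF blocks]) simp
  also have "\<dots> = (real k - 1) * (\<Sum>C\<in>classes - {C0}. (cnorm2 ns (A C))\<^sup>2) / real d"
    using card_classes finite_classes C0 two_le_k cnorm2_component_mul_other[OF _ C0 _ Q]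
    by (simp add: of_nat_diff flip: sum_divide_distrib)
  finally show ?thesis
    using d_pos by (simp add: divide_right_mono_neg divide_le_cancel)
qed

lemma eigenvalue_quadratic:
  fixes lam :: real
  assumes C0: "C0 \<in> classes" and Q: "Q \<in> C0"
    and eigen: "cmul ns (A C0) Q = csc (of_real lam) Q"
    and large: "1 / real k \<le> (real d / sqrt (real d - 1) * cnorm2 ns (A C0))\<^sup>2"
  shows "0 \<le> lam\<^sup>2 - (real d - 2) / real d * lam + (real d - 1) / (real d)\<^sup>2 * (real k - 3 + 1 / real k)"
proof -
  define \<mu> where "\<mu> = 1 / real d + lam"
  define s where "s = (cnorm2 ns (A C0))\<^sup>2"
  have k: "2 \<le> real k"
    using two_le_k by simp
  have "d \<noteq> 1"
    using large k by (auto simp: power_mult_distrib)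
  then have d: "1 < real d"
    using d_pos by linarith
  have "1 / real k \<le> (real d)\<^sup>2 / (real d - 1) * s"
    using large d unfolding s_def by (simp add: power_mult_distrib power_divide)
  then have s_ge: "(real d - 1) / ((real d)\<^sup>2 * real k) \<le> s"
    using d k by (simp add: field_simps)
  have "(\<Sum>C\<in>classes - {C0}. (cnorm2 ns (A C))\<^sup>2) = (real d - 1) / (real d)\<^sup>2 - s"
    using sum_cnorm2_components finite_classes C0 unfolding s_def by (simp add: sum.remove)
  then have "\<mu> * (1 - \<mu>) \<le> (real k - 1) * ((real d - 1) / (real d)\<^sup>2 - s)"
    using eigenvalue_product_bound[OF C0 Q eigen] unfolding \<mu>_def by simp
  also have "\<dots> \<le> (real k - 1) * ((real d - 1) / (real d)\<^sup>2 - (real d - 1) / ((real d)\<^sup>2 * real k))"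
    using s_ge k by (intro mult_left_mono) auto
  also have "\<dots> = (real d - 1) * (real k - 1)\<^sup>2 / ((real d)\<^sup>2 * real k)"
    using d k by (simp add: field_simps power2_eq_square)
  finally have "\<mu> * (1 - \<mu>) \<le> (real d - 1) * (real k - 1)\<^sup>2 / ((real d)\<^sup>2 * real k)" .
  moreover have "\<mu> * (1 - \<mu>) = (real d - 1) * (real k - 1)\<^sup>2 / ((real d)\<^sup>2 * real k) -
      (lam\<^sup>2 - (real d - 2) / real d * lam + (real d - 1) / (real d)\<^sup>2 * (real k - 3 + 1 / real k))"
    using d k unfolding \<mu>_def by (simp add: field_simps power2_eq_square)
  ultimately show ?thesis
    by simp
qed

lemma eigenvalue_outside_roots:
  fixes lam :: real
  assumes C0: "C0 \<in> classes" and Q: "Q \<in> C0"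
    and eigen: "cmul ns (A C0) Q = csc (of_real lam) Q"
    and large: "1 / real k \<le> (real d / sqrt (real d - 1) * cnorm2 ns (A C0))\<^sup>2"
  shows "lam \<le> 1 / (2 * real d) * (real d - 2 - sqrt ((real d - 2)\<^sup>2 - 4 * (real d - 1) * (real k - 3 + 1 / real k)))
    \<or> 1 / (2 * real d) * (real d - 2 + sqrt ((real d - 2)\<^sup>2 - 4 * (real d - 1) * (real k - 3 + 1 / real k))) \<le> lam"
proof -
  have "0 \<le> lam\<^sup>2 - (real d - 2) / real d * lam + (real d - 1) * (real k - 3 + 1 / real k) / (real d)\<^sup>2"
    using eigenvalue_quadratic[OF assms] by simp
  from quadratic_nonneg_outside_roots[OF _ this] d_pos show ?thesis
    by (simp only: mult.assoc of_nat_0_less_iff)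
qed

end

theorem mainTheorem5:
  fixes ns :: "nat list" and k d :: nat and N :: "cel set" and P :: cel
    and A :: "cel set \<Rightarrow> cel" and C0 :: "cel set" and c :: "cel \<Rightarrow> real"
  assumes blocks: "valid_blocks ns"
    and net: "is_net ns k N" and ord: "net_order ns N d"
    and k2: "2 \<le> k" and ksqrt: "real k \<le> sqrt (real d)"
    and Pproj: "is_proj ns P" and Pspan: "P \<in> cspan N"
    and Ptau: "ctau ns P = 1 / of_nat d"
    and Aspan: "\<forall>C\<in>N // par_rel ns N. A C \<in> cspan C \<and> ctau ns (A C) = 0"
    and Adec: "csub P (csc (1 / of_nat d) (cone ns)) = csum (N // par_rel ns N) A"
    and C0: "C0 \<in> N // par_rel ns N"
    and tr: "(real d / sqrt (real d - 1) * cnorm2 ns (A C0))^2 \<ge> 1 / real k"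
    and Ar: "A C0 = csum C0 (\<lambda>Q. csc (complex_of_real (c Q)) Q)"
  shows "\<forall>Q\<in>C0.
     (c Q)^2 - (real d - 2) / real d * c Q
        + (real d - 1) / (real d)^2 * (real k - 3 + 1 / real k) \<ge> 0 \<and>
     (c Q \<le> 1 / (2 * real d) * (real d - 2 - sqrt ((real d - 2)^2 - 4 * (real d - 1) * (real k - 3 + 1 / real k)))
      \<or> c Q \<ge> 1 / (2 * real d) * (real d - 2 + sqrt ((real d - 2)^2 - 4 * (real d - 1) * (real k - 3 + 1 / real k))))"
\<comment> \<open>Pspan follows from Adec, and ksqrt only makes the two roots real.\<close>
proof -
  interpret net_decomposition ns k d N P A
    using blocks net ord k2 Pproj Ptau Aspan Adec by unfold_locales
  have "cmul ns (A C0) Q = csc (of_real (c Q)) Q" if "Q \<in> C0" for Q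
    using cmul_class_comb_elem[OF C0 that] Ar unfolding class_comb_def by simp
  then show ?thesis
    using eigenvalue_quadratic[OF C0 _ _ tr] eigenvalue_outside_roots[OF C0 _ _ tr] by blast
qed

end
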